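(* Let $1<\alpha<2$, $a<b$, and $q\in C[a,b]$. Suppose the boundary value problem $$T^a_\alpha u(t)+q(t)u(t)=0\ \ (a<t<b),\qquad u(a)=u(b)=0,$$ has a solution $u\in AC^2[a,b]$, twice differentiable on $(a,b)$, such that $u(t)\ne0$ for almost every $t\in(a,b)$. Then $$\int_a^b |q(s)|\,(s-a)^{\alpha-2}\,ds\ \ge\ \frac{4}{b-a}.$$
   Context: Conformable derivative: for $0<\beta<1$ and a function $h:[a,\infty)\to\mathbb{R}$, $T^a_\beta h(t)=\lim_{\varepsilon\to0}\frac{h(t+\varepsilon(t-a)^{1-\beta})-h(t)}{\varepsilon}$ for $t>a$, whenever the limit exists. For $1<\alpha<2$ and $g$ with derivative $g'$, $T^a_\alpha g(t)=T^a_{\alpha-1}g'(t)$; for $t>a$ this exists iff $g'$ is differentiable at $t$, and then $T^a_\alpha g(t)=(t-a)^{2-\alpha}g''(t)$. $AC^2[a,b]=\{u\in C^1[a,b]: u'\text{ absolutely continuous on }[a,b]\}$. A solution satisfies the equation at every $t\in(a,b)$ and the boundary conditions. *)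

theory Defs
  imports "HOL-Analysis.Analysis"
begin

definition abs_continuous_on :: "real \<Rightarrow> real \<Rightarrow> (real \<Rightarrow> real) \<Rightarrow> bool" where
  "abs_continuous_on a b f \<longleftrightarrow>
     (\<forall>\<epsilon>>0. \<exists>\<delta>>0. \<forall>(n::nat) (l::nat \<Rightarrow> real) (r::nat \<Rightarrow> real).
        (\<forall>i<n. a \<le> l i \<and> l i \<le> r i \<and> r i \<le> b) \<and>
        (\<forall>i<n. \<forall>j<n. i \<noteq> j \<longrightarrow> r i \<le> l j \<or> r j \<le> l i) \<and>
        (\<Sum>i<n. r i - l i) < \<delta>
        \<longrightarrow> (\<Sum>i<n. \<bar>f (r i) - f (l i)\<bar>) < \<epsilon>)"

definition AC2 :: "real \<Rightarrow> real \<Rightarrow> (real \<Rightarrow> real) \<Rightarrow> bool" where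
  "AC2 a b u \<longleftrightarrow> (\<exists>u'. (\<forall>t\<in>{a..b}. (u has_real_derivative u' t) (at t within {a..b}))
      \<and> continuous_on {a..b} u' \<and> abs_continuous_on a b u')"

definition has_conformable_deriv :: "real \<Rightarrow> real \<Rightarrow> (real \<Rightarrow> real) \<Rightarrow> real \<Rightarrow> real \<Rightarrow> bool" where
  "has_conformable_deriv \<beta> a h t D \<longleftrightarrow>
     ((\<lambda>\<epsilon>. (h (t + \<epsilon> * (t - a) powr (1 - \<beta>)) - h t) / \<epsilon>) \<longlongrightarrow> D) (at 0)"

definition has_conformable_deriv2 :: "real \<Rightarrow> real \<Rightarrow> (real \<Rightarrow> real) \<Rightarrow> real \<Rightarrow> real \<Rightarrow> bool" where
  "has_conformable_deriv2 \<alpha> a g t D \<longleftrightarrow> has_conformable_deriv (\<alpha> - 1) a (deriv g) t D"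

end

theory Submission
  imports Defs
begin

text \<open>At a point \<open>t > a\<close> where \<open>h\<close> is differentiable, the conformable derivative
of order \<open>\<beta>\<close> is \<open>(t - a) powr (1 - \<beta>)\<close> times \<open>h' t\<close>. Hence the boundary value problem
is the classical one \<open>u'' + p u = 0\<close> with \<open>p s = q s * (s - a) powr (\<alpha> - 2)\<close>, and
the classical Lyapunov argument applies: let \<open>|u|\<close> attain its maximum \<open>M > 0\<close> at \<open>c\<close>.
The mean value theorem on \<open>[a, c]\<close> and \<open>[c, b]\<close> gives points \<open>x < c < y\<close> with
\<open>u' x = u c / (c - a)\<close> and \<open>u' y = - u c / (b - c)\<close>, and integrating \<open>u'' = - p u\<close>
from \<open>x\<close> to \<open>y\<close> yields \<open>M (1 / (c - a) + 1 / (b - c)) \<le> M \<integral>\<^sub>a\<^sup>b |p|\<close>.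
Finally \<open>1 / (c - a) + 1 / (b - c) \<ge> 4 / (b - a)\<close> by AM-GM.\<close>

lemma has_conformable_deriv_eq_real_derivative:
  assumes "a < t" and "(h has_real_derivative D') (at t)"
    and "has_conformable_deriv \<beta> a h t D"
  shows "D = (t - a) powr (1 - \<beta>) * D'"
proof -
  define k where "k = (t - a) powr (1 - \<beta>)"
  have "((\<lambda>\<epsilon>. h (t + \<epsilon> * k)) has_real_derivative D' * k) (at 0)"
    using assms(2) by (auto intro!: DERIV_chain2[of h] derivative_eq_intros)
  then have "((\<lambda>\<epsilon>. (h (t + \<epsilon> * k) - h t) / \<epsilon>) \<longlongrightarrow> D' * k) (at 0)"
    by (simp add: has_field_derivative_iff)
  moreover have "((\<lambda>\<epsilon>. (h (t + \<epsilon> * k) - h t) / \<epsilon>) \<longlongrightarrow> D) (at 0)"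
    using assms(3) unfolding has_conformable_deriv_def k_def .
  ultimately show ?thesis
    using tendsto_unique[of "at (0::real)"] by (simp add: k_def mult.commute)
qed

lemma has_conformable_deriv2_imp_second_deriv:
  assumes "a < t" and "deriv g differentiable (at t)"
    and "has_conformable_deriv2 \<alpha> a g t L"
  shows "(deriv g has_real_derivative L * (t - a) powr (\<alpha> - 2)) (at t)"
proof -
  have D2: "(deriv g has_real_derivative deriv (deriv g) t) (at t)"
    using assms(2) by (simp add: DERIV_deriv_iff_real_differentiable)
  have "L = (t - a) powr (2 - \<alpha>) * deriv (deriv g) t"
    using has_conformable_deriv_eq_real_derivative[OF assms(1) D2, of "\<alpha> - 1" L] assms(3)
    by (simp add: has_conformable_deriv2_def)
  then have "L * (t - a) powr (\<alpha> - 2) = (t - a) powr ((2 - \<alpha>) + (\<alpha> - 2)) * deriv (deriv g) t"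
    by (simp only: powr_add mult_ac)
  also have "\<dots> = deriv (deriv g) t"
    using assms(1) by simp
  finally show ?thesis
    using D2 by simp
qed

lemma AC2_continuous_on: "AC2 a b u \<Longrightarrow> continuous_on {a..b} u"
  unfolding AC2_def by (blast intro: DERIV_continuous_on)

lemma AC2_has_real_derivative_interior:
  assumes "AC2 a b u" and "t \<in> {a<..<b}"
  shows "(u has_real_derivative deriv u t) (at t)"
proof -
  obtain u' where "(u has_real_derivative u' t) (at t within {a..b})"
    using assms unfolding AC2_def by fastforce
  then have "(u has_real_derivative u' t) (at t)"
    using assms(2) at_within_Icc_at[of a t b] by simp
  then show ?thesis by (simp add: DERIV_imp_deriv)
qed

lemma AE_nonzero_imp_ex_nonzero:
  fixes u :: "real \<Rightarrow> real"
  assumes "a < b" and "AE t in lborel. t \<in> {a<..<b} \<longrightarrow> u t \<noteq> 0"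
  shows "\<exists>t\<in>{a<..<b}. u t \<noteq> 0"
proof (rule ccontr)
  assume "\<not> ?thesis"
  then have zero: "\<forall>t\<in>{a<..<b}. u t = 0" by blast
  have "AE t in lborel. t \<notin> {a<..<b}"
    using assms(2) by eventually_elim (use zero in auto)
  then have "{a<..<b} \<in> null_sets lborel"
    by (subst AE_iff_null_sets) auto
  then have "emeasure lborel {a<..<b} = 0"
    by auto
  with assms(1) show False by simp
qed

lemma powr_shifted_integrable_on:
  fixes a b r :: real
  assumes "-1 < r" "a \<le> b"
  shows "(\<lambda>s. (s - a) powr r) integrable_on {a..b}"
proof -
  have "((\<lambda>x. x powr r) has_integral ((b - a) powr (r + 1) / (r + 1))) {0..b - a}"
    using has_integral_powr_from_0 assms by simp
  from has_integral_affinity'[OF this[unfolded cbox_interval[symmetric]], of 1 "-a"]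
  show ?thesis by (auto simp: integrable_on_def)
qed

lemma continuous_mult_powr_absolutely_integrable_on:
  fixes q :: "real \<Rightarrow> real" and a b r :: real
  assumes "continuous_on {a..b} q" and "-1 < r" "a \<le> b"
  shows "(\<lambda>s. q s * (s - a) powr r) absolutely_integrable_on {a..b}"
proof (rule absolutely_integrable_bounded_measurable_product_real)
  show "q \<in> borel_measurable (lebesgue_on {a..b})" and "bounded (q ` {a..b})"
    using assms(1) by (auto intro: continuous_imp_measurable_on_sets_lebesgue
        compact_imp_bounded compact_continuous_image)
  show "(\<lambda>s. (s - a) powr r) absolutely_integrable_on {a..b}"
    using powr_shifted_integrable_on[OF assms(2,3)]
    by (simp add: absolutely_integrable_on_iff_nonneg)
qed auto

lemma interval_integral_eq_integral_continuous_on_open: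
  fixes f :: "real \<Rightarrow> real"
  assumes "a \<le> b" and "f absolutely_integrable_on {a..b}"
    and "continuous_on {a<..<b} f"
  shows "(LBINT x=a..b. f x) = integral {a..b} f"
proof -
  have "f absolutely_integrable_on {a<..<b}"
    by (rule set_integrable_subset[OF assms(2)]) auto
  moreover have "(\<lambda>x. indicator {a<..<b} x *\<^sub>R f x) \<in> borel_measurable lborel"
    using borel_measurable_continuous_on_indicator[OF _ assms(3)] by simp
  ultimately have "set_integrable lborel {a<..<b} f"
    unfolding set_integrable_def by (subst (asm) integrable_completion) auto
  then show ?thesis
    using interval_integral_eq_integral'[of a b f] assms(1)
    by (simp add: integral_open_interval_real)
qed

lemma MVT_has_real_derivative:
  fixes f f' :: "real \<Rightarrow> real"
  assumes "a < b" and "continuous_on {a..b} f"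
    and "\<And>x. x \<in> {a<..<b} \<Longrightarrow> (f has_real_derivative f' x) (at x)"
  shows "\<exists>x\<in>{a<..<b}. f b - f a = (b - a) * f' x"
proof -
  have "\<And>x. a < x \<Longrightarrow> x < b \<Longrightarrow> f differentiable (at x)"
    using assms(3) real_differentiable_def by auto
  then obtain l x where "a < x" "x < b" "(f has_real_derivative l) (at x)" "f b - f a = (b - a) * l"
    using MVT[OF assms(1,2)] by blast
  moreover have "l = f' x"
    using DERIV_unique[OF calculation(3) assms(3)] calculation(1,2) by simp
  ultimately show ?thesis by auto
qed

lemma four_div_le_inverse_sum:
  fixes a b c :: real
  assumes "a < c" "c < b"
  shows "4 / (b - a) \<le> 1 / (c - a) + 1 / (b - c)"
proof -
  have "4 * ((c - a) * (b - c)) \<le> (b - a) * (b - a)"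
    using zero_le_power2[of "2 * c - a - b"] by (simp add: power2_eq_square algebra_simps)
  moreover have "1 / (c - a) + 1 / (b - c) = (b - a) / ((c - a) * (b - c))"
    using assms by (simp add: field_simps)
  ultimately show ?thesis
    using assms by (simp add: divide_simps)
qed

lemma abs_diff_le_integral_of_second_deriv:
  fixes u u' p :: "real \<Rightarrow> real"
  assumes "x \<le> y"
    and "\<And>s. s \<in> {x..y} \<Longrightarrow> (u' has_real_derivative - p s * u s) (at s within {x..y})"
    and "\<And>s. s \<in> {x..y} \<Longrightarrow> \<bar>u s\<bar> \<le> M"
    and "(\<lambda>s. \<bar>p s\<bar>) integrable_on {x..y}"
  shows "\<bar>u' y - u' x\<bar> \<le> M * integral {x..y} (\<lambda>s. \<bar>p s\<bar>)"
proof -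
  have ftc: "((\<lambda>s. - p s * u s) has_integral (u' y - u' x)) {x..y}"
    using assms(1,2)
    by (auto intro!: fundamental_theorem_of_calculus
             simp: has_real_derivative_iff_has_vector_derivative[symmetric])
  have "\<bar>u' y - u' x\<bar> = norm (integral {x..y} (\<lambda>s. - p s * u s))"
    using integral_unique[OF ftc] by simp
  also have "\<dots> \<le> integral {x..y} (\<lambda>s. M * \<bar>p s\<bar>)"
  proof (rule integral_norm_bound_integral)
    fix s assume "s \<in> {x..y}"
    then have "\<bar>u s\<bar> * \<bar>p s\<bar> \<le> M * \<bar>p s\<bar>"
      using assms(3) by (intro mult_right_mono) auto
    then show "norm (- p s * u s) \<le> M * \<bar>p s\<bar>"
      by (simp add: abs_mult mult.commute)
  qed (use ftc integrable_on_cmult_left[OF assms(4), of M] in auto)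
  finally show ?thesis
    by simp
qed

theorem lyapunov_inequality:
  fixes u u' p :: "real \<Rightarrow> real"
  assumes "a < b" and "continuous_on {a..b} u" and "u a = 0" "u b = 0"
    and "\<exists>t\<in>{a<..<b}. u t \<noteq> 0"
    and "\<And>t. t \<in> {a<..<b} \<Longrightarrow> (u has_real_derivative u' t) (at t)"
    and "\<And>t. t \<in> {a<..<b} \<Longrightarrow> (u' has_real_derivative - p t * u t) (at t)"
    and "(\<lambda>s. \<bar>p s\<bar>) integrable_on {a..b}"
  shows "4 / (b - a) \<le> integral {a..b} (\<lambda>s. \<bar>p s\<bar>)"
proof -
  have "continuous_on {a..b} (\<lambda>s. \<bar>u s\<bar>)"
    using assms(2) by (intro continuous_intros)
  then obtain c where c: "c \<in> {a..b}" "\<And>s. s \<in> {a..b} \<Longrightarrow> \<bar>u s\<bar> \<le> \<bar>u c\<bar>"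
    using continuous_attains_sup[of "{a..b}" "\<lambda>s. \<bar>u s\<bar>"] assms(1) by auto
  define M where "M = \<bar>u c\<bar>"
  obtain t where "t \<in> {a<..<b}" "u t \<noteq> 0"
    using assms(5) by blast
  then have "M > 0"
    using c(2)[of t] unfolding M_def by auto
  then have "c \<noteq> a" "c \<noteq> b"
    using assms(3,4) unfolding M_def by auto
  with c(1) have ac: "a < c" and cb: "c < b"
    by auto
  obtain x where x: "a < x" "x < c" "u c - u a = (c - a) * u' x"
    using MVT_has_real_derivative[OF ac continuous_on_subset[OF assms(2)], of u'] assms(6) cb
    by auto
  obtain y where y: "c < y" "y < b" "u b - u c = (b - c) * u' y"
    using MVT_has_real_derivative[OF cb continuous_on_subset[OF assms(2)], of u'] assms(6) ac
    by auto
  have xy: "{x..y} \<subseteq> {a<..<b}" and xy_closed: "{x..y} \<subseteq> {a..b}"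
    using x y by auto
  have "u' x = u c / (c - a)"
    using x(3) assms(3) ac by (simp add: field_simps)
  moreover have "u' y = - u c / (b - c)"
    using y(3) assms(4) cb by (simp add: field_simps)
  ultimately have "u' y - u' x = - u c * (1 / (c - a) + 1 / (b - c))"
    by (simp add: algebra_simps)
  moreover have "0 < 1 / (c - a) + 1 / (b - c)"
    using ac cb by (intro add_pos_pos) auto
  ultimately have "M * (1 / (c - a) + 1 / (b - c)) = \<bar>u' y - u' x\<bar>"
    unfolding M_def by (simp add: abs_mult)
  also have "\<dots> \<le> M * integral {x..y} (\<lambda>s. \<bar>p s\<bar>)"
  proof (rule abs_diff_le_integral_of_second_deriv)
    show "x \<le> y"
      using x y by simp
    show "(u' has_real_derivative - p s * u s) (at s within {x..y})" if "s \<in> {x..y}" for s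
      using assms(7)[of s] that xy by (simp add: has_field_derivative_at_within subset_iff)
    show "\<bar>u s\<bar> \<le> M" if "s \<in> {x..y}" for s
      using c(2)[of s] subsetD[OF xy that] unfolding M_def by simp
    show "(\<lambda>s. \<bar>p s\<bar>) integrable_on {x..y}"
      using integrable_on_subinterval[OF assms(8) xy_closed] .
  qed
  also have "\<dots> \<le> M * integral {a..b} (\<lambda>s. \<bar>p s\<bar>)"
  proof (rule mult_left_mono)
    show "integral {x..y} (\<lambda>s. \<bar>p s\<bar>) \<le> integral {a..b} (\<lambda>s. \<bar>p s\<bar>)"
      using xy_closed integrable_on_subinterval[OF assms(8) xy_closed]
      by (intro integral_subset_le assms(8)) auto
  qed (use \<open>M > 0\<close> in simp)
  finally have "1 / (c - a) + 1 / (b - c) \<le> integral {a..b} (\<lambda>s. \<bar>p s\<bar>)"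
    using \<open>M > 0\<close> by simp
  then show ?thesis
    using four_div_le_inverse_sum[OF ac cb] by linarith
qed

theorem theorem2:
  fixes \<alpha> a b :: real and q u :: "real \<Rightarrow> real"
  assumes "1 < \<alpha>" "\<alpha> < 2" "a < b"
    and "continuous_on {a..b} q"
    and "AC2 a b u"
    and "\<forall>t\<in>{a<..<b}. deriv u differentiable (at t)"
    and "\<forall>t\<in>{a<..<b}. has_conformable_deriv2 \<alpha> a u t (- q t * u t)"
    and "u a = 0" "u b = 0"
    and "AE t in lborel. t \<in> {a<..<b} \<longrightarrow> u t \<noteq> 0"
  shows "(LBINT s=a..b. \<bar>q s\<bar> * (s - a) powr (\<alpha> - 2)) \<ge> 4 / (b - a)"
proof -
  define p where "p s = q s * (s - a) powr (\<alpha> - 2)" for s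
  have abs_p: "\<bar>p s\<bar> = \<bar>q s\<bar> * (s - a) powr (\<alpha> - 2)" for s
    by (simp add: p_def abs_mult)
  have abs_p_integrable: "(\<lambda>s. \<bar>p s\<bar>) absolutely_integrable_on {a..b}"
    using continuous_mult_powr_absolutely_integrable_on[of a b "\<lambda>s. \<bar>q s\<bar>" "\<alpha> - 2"]
      continuous_on_rabs[OF assms(4)] assms(1,3)
    by (simp add: abs_p)
  moreover have "continuous_on {a<..<b} (\<lambda>s. \<bar>p s\<bar>)"
    unfolding abs_p by (intro continuous_intros continuous_on_subset[OF assms(4)]) auto
  ultimately have "(LBINT s=a..b. \<bar>q s\<bar> * (s - a) powr (\<alpha> - 2)) = integral {a..b} (\<lambda>s. \<bar>p s\<bar>)"
    using interval_integral_eq_integral_continuous_on_open[of a b "\<lambda>s. \<bar>p s\<bar>"] assms(3)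
    by (simp add: abs_p)
  moreover have "4 / (b - a) \<le> integral {a..b} (\<lambda>s. \<bar>p s\<bar>)"
  proof (rule lyapunov_inequality)
    show "(u has_real_derivative deriv u t) (at t)" if "t \<in> {a<..<b}" for t
      using AC2_has_real_derivative_interior[OF assms(5) that] .
    show "(deriv u has_real_derivative - p t * u t) (at t)" if "t \<in> {a<..<b}" for t
      using has_conformable_deriv2_imp_second_deriv[of a t u \<alpha> "- q t * u t"] that assms(6,7)
      by (simp add: p_def mult_ac)
    show "continuous_on {a..b} u"
      using AC2_continuous_on[OF assms(5)] .
    show "\<exists>t\<in>{a<..<b}. u t \<noteq> 0"
      using AE_nonzero_imp_ex_nonzero[OF assms(3,10)] .
    show "(\<lambda>s. \<bar>p s\<bar>) integrable_on {a..b}"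
      using abs_p_integrable set_lebesgue_integral_eq_integral(1) by blast
  qed (use assms(3,8,9) in auto)
  ultimately show ?thesis by simp
qed

end
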